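(* Let $k$ be an algebraically closed field of characteristic zero, $A=k[x,y]$, $\mathfrak m=(x,y)$. Let $M$ be an $A$-module of length $n\geq 3$ supported at $\mathfrak m$ whose minimal number of generators $r_M=\dim_k M/\mathfrak m M$ equals $n-1$. Then $M\cong k^{n-3}\oplus N$, where $k=A/\mathfrak m$ and $N$ is an $A$-module of length $3$ (supported at $\mathfrak m$) with $r_N=2$. *)

theory Defs
  imports "HOL-Computational_Algebra.Polynomial" "Jordan_Normal_Form.DL_Rank"
begin

definition alg_closed :: "'a::field itself \<Rightarrow> bool" where
  "alg_closed T \<longleftrightarrow> (\<forall>p::'a poly. degree p > 0 \<longrightarrow> (\<exists>z. poly p z = 0))"

definition nilpotent_mat :: "'a::semiring_1 mat \<Rightarrow> bool" where
  "nilpotent_mat X \<longleftrightarrow> (\<exists>k. X ^\<^sub>m k = 0\<^sub>m (dim_row X) (dim_col X))"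

text \<open>A k[x,y]-module of finite length n supported at m=(x,y) is the k-vector space k^n
  together with the commuting nilpotent actions X (of x) and Y (of y).\<close>
definition kxy_module :: "nat \<Rightarrow> 'a::field mat \<Rightarrow> 'a mat \<Rightarrow> bool" where
  "kxy_module n X Y \<longleftrightarrow> X \<in> carrier_mat n n \<and> Y \<in> carrier_mat n n \<and> X * Y = Y * X
     \<and> nilpotent_mat X \<and> nilpotent_mat Y"

text \<open>r_M = dim_k M/mM, where mM = xM + yM is the column space of the block matrix [X | Y].\<close>
definition min_gens :: "nat \<Rightarrow> 'a::field mat \<Rightarrow> 'a mat \<Rightarrow> nat" where
  "min_gens n X Y = n - vec_space.rank n (four_block_mat X Y (0\<^sub>m 0 n) (0\<^sub>m 0 n))"

definition kxy_iso :: "nat \<Rightarrow> 'a::field mat \<Rightarrow> 'a mat \<Rightarrow> 'a mat \<Rightarrow> 'a mat \<Rightarrow> bool" where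
  "kxy_iso n X Y X' Y' \<longleftrightarrow> (\<exists>P Q. P \<in> carrier_mat n n \<and> Q \<in> carrier_mat n n \<and>
      P * Q = 1\<^sub>m n \<and> Q * P = 1\<^sub>m n \<and> X = P * X' * Q \<and> Y = P * Y' * Q)"

text \<open>Direct sum k^m \<oplus> N (x,y acting by zero on k^m = (A/m)^m), N given by 3x3 matrices.\<close>
definition triv_plus :: "nat \<Rightarrow> 'a::field mat \<Rightarrow> 'a mat" where
  "triv_plus m Z = four_block_mat (0\<^sub>m m m) (0\<^sub>m m (dim_col Z)) (0\<^sub>m (dim_row Z) m) Z"

end

theory Submission
  imports Defs "Jordan_Normal_Form.Matrix_Kernel"
begin

text \<open>
  The condition r_M = n - 1 says that mM, the column space of the block matrix [X | Y], is a line
  spanned by some v \<noteq> 0; hence X = v a^T and Y = v b^T for linear forms a, b, and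
  nilpotency forces a(v) = b(v) = 0. The common zeros of a and b form a subspace of dimension at
  least n - 2 containing v, so there is a basis whose first n - 3 vectors are killed by a and b,
  followed by v and two further vectors. In this basis x and y vanish on the first n - 3 vectors,
  which span a copy of k^(n-3), and act on the last three by maps of rank at most one
  with image the line through v, which they annihilate: this is the module N of length 3 with
  r_N = 2.
\<close>

definition outer_mat :: "'a::comm_ring_1 vec \<Rightarrow> 'a vec \<Rightarrow> 'a mat" where
  "outer_mat v w = mat (dim_vec v) (dim_vec w) (\<lambda>(i, j). v $ i * w $ j)"

lemma outer_mat_carrier [simp]: "outer_mat v w \<in> carrier_mat (dim_vec v) (dim_vec w)"
  and dim_row_outer_mat [simp]: "dim_row (outer_mat v w) = dim_vec v"
  and dim_col_outer_mat [simp]: "dim_col (outer_mat v w) = dim_vec w"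
  by (simp_all add: outer_mat_def)

lemma index_outer_mat [simp]:
  "i < dim_vec v \<Longrightarrow> j < dim_vec w \<Longrightarrow> outer_mat v w $$ (i, j) = v $ i * w $ j"
  by (simp add: outer_mat_def)

lemma col_outer_mat: "j < dim_vec w \<Longrightarrow> col (outer_mat v w) j = w $ j \<cdot>\<^sub>v v"
  by (auto simp: mult.commute)

lemma outer_mat_mult_vec:
  assumes "u \<in> carrier_vec (dim_vec w)"
  shows "outer_mat v w *\<^sub>v u = (w \<bullet> u) \<cdot>\<^sub>v v"
proof (rule eq_vecI)
  fix i assume "i < dim_vec ((w \<bullet> u) \<cdot>\<^sub>v v)"
  then have i: "i < dim_vec v" by simp
  have "(outer_mat v w *\<^sub>v u) $ i = (\<Sum>j<dim_vec w. v $ i * w $ j * u $ j)"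
    using i assms by (simp add: scalar_prod_def row_def atLeast0LessThan)
  also have "\<dots> = v $ i * (w \<bullet> u)"
    using assms by (simp add: scalar_prod_def sum_distrib_left mult.assoc atLeast0LessThan)
  finally show "(outer_mat v w *\<^sub>v u) $ i = ((w \<bullet> u) \<cdot>\<^sub>v v) $ i"
    using i by (simp add: mult.commute)
qed simp

lemma mult_outer_mat:
  assumes "Q \<in> carrier_mat k (dim_vec v)"
  shows "Q * outer_mat v w = outer_mat (Q *\<^sub>v v) w"
proof (rule eq_matI)
  fix i j assume i: "i < dim_row (outer_mat (Q *\<^sub>v v) w)" and j: "j < dim_col (outer_mat (Q *\<^sub>v v) w)"
  have "(Q * outer_mat v w) $$ (i, j) = (\<Sum>l<dim_vec v. Q $$ (i, l) * (v $ l * w $ j))"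
    using i j assms by (simp add: scalar_prod_def atLeast0LessThan)
  also have "\<dots> = (\<Sum>l<dim_vec v. Q $$ (i, l) * v $ l) * w $ j"
    by (simp add: sum_distrib_right mult.assoc)
  finally show "(Q * outer_mat v w) $$ (i, j) = outer_mat (Q *\<^sub>v v) w $$ (i, j)"
    using i j assms by (simp add: scalar_prod_def atLeast0LessThan)
qed (use assms in auto)

lemma outer_mat_mult:
  assumes "P \<in> carrier_mat (dim_vec w) k"
  shows "outer_mat v w * P = outer_mat v (transpose_mat P *\<^sub>v w)"
proof (rule eq_matI)
  fix i j assume i: "i < dim_row (outer_mat v (transpose_mat P *\<^sub>v w))"
    and j: "j < dim_col (outer_mat v (transpose_mat P *\<^sub>v w))"
  have "(outer_mat v w * P) $$ (i, j) = (\<Sum>l<dim_vec w. v $ i * w $ l * P $$ (l, j))"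
    using i j assms by (simp add: scalar_prod_def atLeast0LessThan)
  also have "\<dots> = v $ i * (\<Sum>l<dim_vec w. P $$ (l, j) * w $ l)"
    by (simp add: sum_distrib_left ac_simps)
  finally show "(outer_mat v w * P) $$ (i, j) = outer_mat v (transpose_mat P *\<^sub>v w) $$ (i, j)"
    using i j assms by (simp add: scalar_prod_def atLeast0LessThan)
qed (use assms in auto)

lemma transpose_outer_mat: "transpose_mat (outer_mat v w) = outer_mat w v"
  by (rule eq_matI) (auto simp: mult.commute)

lemma outer_mat_smult_right: "outer_mat v (c \<cdot>\<^sub>v w) = c \<cdot>\<^sub>m outer_mat v w"
  by (rule eq_matI) (auto simp: ac_simps)

lemma outer_mat_mult_outer_mat:
  assumes "u \<in> carrier_vec (dim_vec w)"
  shows "outer_mat v w * outer_mat u z = (w \<bullet> u) \<cdot>\<^sub>m outer_mat v z"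
proof -
  have "outer_mat u z \<in> carrier_mat (dim_vec w) (dim_vec z)"
    using assms outer_mat_carrier[of u z] by simp
  then have "outer_mat v w * outer_mat u z = outer_mat v (outer_mat z u *\<^sub>v w)"
    using outer_mat_mult[of "outer_mat u z" w "dim_vec z" v] by (simp add: transpose_outer_mat)
  also have "\<dots> = (w \<bullet> u) \<cdot>\<^sub>m outer_mat v z"
    using assms comm_scalar_prod[OF assms carrier_vec_dim_vec]
    by (simp add: outer_mat_mult_vec outer_mat_smult_right)
  finally show ?thesis .
qed

lemma four_block_outer_mat:
  "four_block_mat (outer_mat v a) (outer_mat v b) (0\<^sub>m 0 (dim_vec a)) (0\<^sub>m 0 (dim_vec b))
     = outer_mat v (a @\<^sub>v b)"
  by (rule eq_matI) (auto simp: outer_mat_def)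

lemma four_block_mat_eq_outer_mat_iff:
  assumes X: "X \<in> carrier_mat n k" and Y: "Y \<in> carrier_mat n l" and v: "v \<in> carrier_vec n"
    and a: "a \<in> carrier_vec k" and b: "b \<in> carrier_vec l"
  shows "four_block_mat X Y (0\<^sub>m 0 k) (0\<^sub>m 0 l) = outer_mat v (a @\<^sub>v b)
    \<longleftrightarrow> X = outer_mat v a \<and> Y = outer_mat v b"
proof
  assume eq: "four_block_mat X Y (0\<^sub>m 0 k) (0\<^sub>m 0 l) = outer_mat v (a @\<^sub>v b)"
  have "X $$ (i, j) = v $ i * a $ j" if "i < n" "j < k" for i j
    using arg_cong[OF eq, of "\<lambda>M. M $$ (i, j)"] that X Y v a b by simp
  moreover have "Y $$ (i, j) = v $ i * b $ j" if "i < n" "j < l" for i j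
    using arg_cong[OF eq, of "\<lambda>M. M $$ (i, k + j)"] that X Y v a b by simp
  ultimately show "X = outer_mat v a \<and> Y = outer_mat v b"
    using X Y v a b by (intro conjI eq_matI) auto
qed (use a b four_block_outer_mat in auto)

lemma zero_mult_mat_vec [simp]:
  "v \<in> carrier_vec nc \<Longrightarrow> 0\<^sub>m nr nc *\<^sub>v v = (0\<^sub>v nr :: 'a::semiring_0 vec)"
  by (intro eq_vecI) (auto simp: scalar_prod_def)

lemma smult_vec_eq_0_iff:
  fixes v :: "'a::idom vec"
  assumes "v \<in> carrier_vec n"
  shows "c \<cdot>\<^sub>v v = 0\<^sub>v n \<longleftrightarrow> c = 0 \<or> v = 0\<^sub>v n"
proof
  assume cv: "c \<cdot>\<^sub>v v = 0\<^sub>v n"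
  show "c = 0 \<or> v = 0\<^sub>v n"
  proof (cases "c = 0")
    case False
    have "v $ i = 0" if "i < n" for i
      using arg_cong[OF cv, of "\<lambda>w. w $ i"] that assms False by simp
    then have "v = 0\<^sub>v n" using assms by (intro eq_vecI) auto
    then show ?thesis ..
  qed simp
qed (use assms in auto)

lemma scalar_prod_col_comm:
  fixes P :: "'a::comm_semiring_0 mat"
  assumes "P \<in> carrier_mat n k" and "a \<in> carrier_vec n" and "j < k"
  shows "col P j \<bullet> a = a \<bullet> col P j"
  using assms by (intro comm_scalar_prod[of _ n]) auto

lemma (in vectorspace) lin_indpt_extends_to_basis:
  assumes "fin_dim" and "S \<subseteq> carrier V" and "lin_indpt S"
  obtains T where "S \<subseteq> T" and "finite T" and "basis T"
proof -
  let ?P = "\<lambda>A. A \<subseteq> carrier V \<and> lin_indpt A \<and> S \<subseteq> A"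
  have "finite A \<and> card A \<le> dim" if "?P A" for A
    using li_le_dim[OF \<open>fin_dim\<close>] that by blast
  then obtain A where "finite A" and A: "maximal A ?P"
    using maximal_exists[of ?P dim S] assms(2,3) by blast
  then have "maximal A (\<lambda>T. T \<subseteq> carrier V \<and> lin_indpt T)"
    unfolding maximal_def by blast
  then have "basis A" by (rule max_li_is_basis)
  with \<open>finite A\<close> A show thesis using that unfolding maximal_def by blast
qed

lemma (in vec_space) lin_indpt_singleton:
  assumes "v \<in> carrier_vec n" and "v \<noteq> 0\<^sub>v n"
  shows "lin_indpt {v}"
proof -
  have "lin_indpt {}"
    using subset_li_is_li[of "set (unit_vecs n)" "{}"] unit_vecs_basis by (auto simp: basis_def)
  moreover have "v \<notin> span {}" using assms(2) by (simp add: span_empty)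
  ultimately show ?thesis using lin_dep_iff_in_span[of "{}" v] assms(1) by simp
qed

lemma (in vec_space) in_span_singletonE:
  assumes "v \<in> carrier_vec n" and "u \<in> span {v}"
  obtains c where "u = c \<cdot>\<^sub>v v"
proof -
  obtain f where "lincomb f {v} = u"
    using finite_in_span[of "{v}" u] assms by auto
  then have "u = f v \<cdot>\<^sub>v v"
    using assms(1) unfolding lincomb_def by simp
  then show thesis using that by blast
qed

lemma (in vec_space) rank_ge_1_if_col_nonzero:
  assumes A: "A \<in> carrier_mat n nc" and "j < nc" and "col A j \<noteq> 0\<^sub>v n"
  shows "1 \<le> rank A"
proof -
  have "lin_indpt {col A j}" using assms by (intro lin_indpt_singleton) auto
  moreover have "{col A j} \<subseteq> set (cols A)" using assms by (auto simp: cols_def)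
  ultimately show ?thesis using rank_ge_card_indpt[OF A, of "{col A j}"] by simp
qed

lemma (in vec_space) rank_outer_mat:
  assumes "v \<in> carrier_vec n" and "v \<noteq> 0\<^sub>v n" and "c \<noteq> 0\<^sub>v (dim_vec c)"
  shows "rank (outer_mat v c) = 1"
proof (rule antisym)
  show "rank (outer_mat v c) \<le> 1"
    using assms(1)
    by (intro rank_le_1_product_entries[of _ "dim_vec c" "\<lambda>i. v $ i" "\<lambda>j. c $ j"]) auto
  obtain j where j: "j < dim_vec c" and "c $ j \<noteq> 0" using assms(3) by (metis eq_vecI index_zero_vec)
  then have "col (outer_mat v c) j \<noteq> 0\<^sub>v n"
    using assms(1,2) by (simp add: col_outer_mat smult_vec_eq_0_iff)
  then show "1 \<le> rank (outer_mat v c)"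
    using assms(1) j by (intro rank_ge_1_if_col_nonzero[of _ "dim_vec c" j]) auto
qed

lemma (in vec_space) col_in_span_if_rank_le_1:
  assumes A: "A \<in> carrier_mat n nc" and rank: "rank A \<le> 1"
    and j0: "j0 < nc" "col A j0 \<noteq> 0\<^sub>v n" and j: "j < nc"
  shows "col A j \<in> span {col A j0}"
proof (rule ccontr)
  let ?v = "col A j0"
  have v: "?v \<in> carrier_vec n" using A j0 by simp
  assume out: "col A j \<notin> span {?v}"
  then have "col A j \<noteq> ?v" using span_self[OF v] by auto
  have "lin_indpt ({?v} \<union> {col A j})"
    using lin_dep_iff_in_span[of "{?v}" "col A j"] out \<open>col A j \<noteq> ?v\<close>
      lin_indpt_singleton[OF v j0(2)] v A j by auto
  moreover have "{?v} \<union> {col A j} \<subseteq> set (cols A)"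
    using j j0 A by (auto simp: cols_def)
  ultimately have "card ({?v} \<union> {col A j}) \<le> 1"
    using rank_ge_card_indpt[OF A] rank order_trans by blast
  with \<open>col A j \<noteq> ?v\<close> show False by simp
qed

lemma (in vec_space) rank_eq_1_imp_outer_mat:
  assumes A: "A \<in> carrier_mat n nc" and rank: "rank A = 1"
  obtains v c where "v \<in> carrier_vec n" and "c \<in> carrier_vec nc" and "v \<noteq> 0\<^sub>v n"
    and "c \<noteq> 0\<^sub>v nc" and "A = outer_mat v c"
proof -
  obtain j0 where j0: "j0 < nc" and "col A j0 \<noteq> 0\<^sub>v n"
  proof (rule ccontr)
    assume "\<not> thesis"
    with that have "A = 0\<^sub>m n nc"
      using A by (intro eq_matI) (auto, metis col_def index_vec index_zero_vec(1) carrier_matD(1))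
    then show False using rank rank_0I by simp
  qed
  define v where "v = col A j0"
  have v: "v \<in> carrier_vec n" "v \<noteq> 0\<^sub>v n"
    using A j0 \<open>col A j0 \<noteq> 0\<^sub>v n\<close> by (auto simp: v_def)
  have "\<exists>t. col A j = t \<cdot>\<^sub>v v" if "j < nc" for j
  proof -
    have "col A j \<in> span {v}"
      using col_in_span_if_rank_le_1[OF A _ j0 \<open>col A j0 \<noteq> 0\<^sub>v n\<close> that] rank by (simp add: v_def)
    then show ?thesis using in_span_singletonE[OF v(1)] by metis
  qed
  then obtain t where t: "\<And>j. j < nc \<Longrightarrow> col A j = t j \<cdot>\<^sub>v v" by metis
  have "A = outer_mat v (vec nc t)"
  proof (rule eq_matI)
    fix i j assume "i < dim_row (outer_mat v (vec nc t))" "j < dim_col (outer_mat v (vec nc t))"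
    then show "A $$ (i, j) = outer_mat v (vec nc t) $$ (i, j)"
      using arg_cong[OF t, of j "\<lambda>w. w $ i"] A v by (simp add: mult.commute)
  qed (use A v in auto)
  moreover have "vec nc t \<noteq> 0\<^sub>v nc"
  proof
    assume "vec nc t = 0\<^sub>v nc"
    then have "t j0 = 0" using j0 by (metis index_vec index_zero_vec(1))
    then show False using t[OF j0] v by (simp add: v_def)
  qed
  ultimately show thesis using that[OF v(1) vec_carrier v(2)] by simp
qed

lemma kernel_dim_ge:
  fixes A :: "'a::field mat"
  assumes A: "A \<in> carrier_mat nr nc"
  shows "nc - nr \<le> kernel_dim A"
proof -
  define B where "B = gauss_jordan_single A"
  have B: "B \<in> carrier_mat nr nc" "row_echelon_form B"
    using gauss_jordan_single(2,3)[OF A B_def[symmetric]] by auto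
  have "length (pivot_positions B) = card {i. i < nr \<and> row B i \<noteq> 0\<^sub>v nc}"
    using find_base_vectors(5)[OF B(2,1)] .
  also have "\<dots> \<le> nr"
    by (rule order_trans[OF card_mono[of "{..<nr}"]]) auto
  finally show ?thesis using kernel_dim_code[of A] A by (simp add: B_def)
qed

lemma mat_kernel_mat_of_rows:
  assumes rs: "set rs \<subseteq> carrier_vec n"
  shows "mat_kernel (mat_of_rows n rs) = {w \<in> carrier_vec n. \<forall>r\<in>set rs. r \<bullet> w = 0}"
proof -
  have row: "(mat_of_rows n rs *\<^sub>v w) $ i = rs ! i \<bullet> w" if "i < length rs" for i w
    using that rs nth_mem[OF that] by (simp add: subsetD)
  have "mat_of_rows n rs *\<^sub>v w = 0\<^sub>v (length rs) \<longleftrightarrow> (\<forall>r\<in>set rs. r \<bullet> w = 0)" for w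
  proof -
    have "mat_of_rows n rs *\<^sub>v w = 0\<^sub>v (length rs) \<longleftrightarrow> (\<forall>i<length rs. rs ! i \<bullet> w = 0)"
      unfolding vec_eq_iff[of "mat_of_rows n rs *\<^sub>v w"] using row by simp
    also have "\<dots> \<longleftrightarrow> (\<forall>r\<in>set rs. r \<bullet> w = 0)"
      by (metis in_set_conv_nth)
    finally show ?thesis .
  qed
  then show ?thesis by (auto simp: mat_kernel_def)
qed

lemma (in kernel) lin_indpt_list_in_kernel:
  assumes v: "v \<in> mat_kernel A" "v \<noteq> 0\<^sub>v nc"
  obtains ks where "length ks = nc - nr - 1" and "set ks \<subseteq> mat_kernel A"
    and "distinct (ks @ [v])" and "NC.lin_indpt (set (ks @ [v]))"
proof -
  have kernel_carrier: "mat_kernel A \<subseteq> carrier_vec nc" by (rule mat_kernel_carrier[OF A])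
  have "Ker.fin_dim"
    using kernel_basis_exists[OF A] unfolding Ker.fin_dim_def Ker.basis_def by blast
  moreover have "lin_indpt {v}"
    using NC.lin_indpt_singleton[of v] lindep_same[of "{v}"] v kernel_carrier by auto
  ultimately obtain T where T: "{v} \<subseteq> T" "finite T" "basis T"
    using Ker.lin_indpt_extends_to_basis[of "{v}"] v by auto
  have "nc - nr \<le> card T"
    using Ker.dim_basis[OF T(2,3)] kernel_dim_ge[OF A] by simp
  then have "nc - nr - 1 \<le> card (T - {v})" using T(1,2) by (simp add: card_Diff_singleton)
  then obtain B where B: "B \<subseteq> T - {v}" "card B = nc - nr - 1" "finite B"
    by (rule obtain_subset_with_card_n)
  obtain ks where ks: "set ks = B" "distinct ks" using finite_distinct_list[OF B(3)] by blast
  have TK: "T \<subseteq> mat_kernel A" using T(3) unfolding Ker.basis_def by blast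
  have sub: "set (ks @ [v]) \<subseteq> T" using B(1) T(1) ks(1) by auto
  then have "lin_indpt (set (ks @ [v]))"
    using Ker.subset_li_is_li[of T] T(3) TK unfolding Ker.basis_def by blast
  then have "NC.lin_indpt (set (ks @ [v]))" using lindep_same sub TK by blast
  moreover have "length ks = nc - nr - 1" using distinct_card[OF ks(2)] ks(1) B(2) by simp
  moreover have "distinct (ks @ [v])" using ks B(1) by auto
  ultimately show thesis using that ks(1) B(1) TK by blast
qed

lemma (in vec_space) lin_indpt_list_extends_to_invertible:
  assumes L: "set L \<subseteq> carrier_vec n" "distinct L" "lin_indpt (set L)"
  obtains P Q where "P \<in> carrier_mat n n" and "Q \<in> carrier_mat n n" and "P * Q = 1\<^sub>m n"
    and "Q * P = 1\<^sub>m n" and "\<And>j. j < length L \<Longrightarrow> col P j = L ! j"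
proof -
  obtain T where T: "set L \<subseteq> T" "finite T" "basis T"
    using lin_indpt_extends_to_basis[OF fin_dim L(1,3)] by blast
  obtain rs where rs: "set rs = T - set L" "distinct rs"
    using finite_distinct_list[of "T - set L"] T(2) by blast
  define M where "M = L @ rs"
  have M: "set M = T" "distinct M" using T(1) rs L(2) by (auto simp: M_def)
  have "length M = n" using distinct_card[OF M(2)] M(1) dim_basis[OF T(2,3)] dim_is_n by simp
  then have P: "mat_of_cols n M \<in> carrier_mat n n" using mat_of_cols_carrier(1)[of n M] by simp
  have TV: "T \<subseteq> carrier_vec n" using T(3) unfolding basis_def by simp
  then have "rank (mat_of_cols n M) = n"
    using lin_indpt_full_rank[OF P] M T(3) unfolding basis_def by simp
  then have "det (mat_of_cols n M) \<noteq> 0" using det_rank_iff[OF P] by simp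
  from det_non_zero_imp_unit[OF P this, unfolded Units_def, of "()"]
  obtain Q where "Q \<in> carrier_mat n n" "mat_of_cols n M * Q = 1\<^sub>m n" "Q * mat_of_cols n M = 1\<^sub>m n"
    by (auto simp: ring_mat_def)
  moreover have "col (mat_of_cols n M) j = L ! j" if "j < length L" for j
  proof -
    have "j < length M" and "M ! j \<in> carrier_vec n" using that M(1) TV nth_mem[of j M]
      by (auto simp: M_def)
    then show ?thesis by (simp add: M_def nth_append that)
  qed
  ultimately show thesis using that P by blast
qed

lemma invertible_mat_with_common_zero_cols:
  fixes rs :: "'a::field vec list"
  assumes rs: "set rs \<subseteq> carrier_vec n" and v: "v \<in> carrier_vec n" "v \<noteq> 0\<^sub>v n"
    and zero: "\<forall>r\<in>set rs. r \<bullet> v = 0"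
  obtains P Q where "P \<in> carrier_mat n n" and "Q \<in> carrier_mat n n" and "P * Q = 1\<^sub>m n"
    and "Q * P = 1\<^sub>m n" and "col P (n - length rs - 1) = v"
    and "\<And>j r. j < n - length rs - 1 \<Longrightarrow> r \<in> set rs \<Longrightarrow> r \<bullet> col P j = 0"
proof -
  let ?C = "mat_of_rows n rs"
  interpret kernel "length rs" n ?C by unfold_locales simp
  have "v \<in> mat_kernel ?C" using mat_kernel_mat_of_rows[OF rs] v zero by simp
  then obtain ks where ks: "length ks = n - length rs - 1" "set ks \<subseteq> mat_kernel ?C"
    "distinct (ks @ [v])" "NC.lin_indpt (set (ks @ [v]))"
    using lin_indpt_list_in_kernel v by blast
  moreover have "set (ks @ [v]) \<subseteq> carrier_vec n"
    using ks(2) mat_kernel_carrier[OF A] v(1) by auto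
  ultimately obtain P Q where PQ: "P \<in> carrier_mat n n" "Q \<in> carrier_mat n n" "P * Q = 1\<^sub>m n"
    "Q * P = 1\<^sub>m n" and cols: "\<And>j. j < length (ks @ [v]) \<Longrightarrow> col P j = (ks @ [v]) ! j"
    using NC.lin_indpt_list_extends_to_invertible by metis
  have "col P (length ks) = v" using cols[of "length ks"] by simp
  then have "col P (n - length rs - 1) = v" using ks(1) by simp
  moreover have "r \<bullet> col P j = 0" if "j < n - length rs - 1" "r \<in> set rs" for j r
  proof -
    have "col P j = ks ! j" using cols[of j] that(1) ks(1) by (simp add: nth_append)
    moreover have "ks ! j \<in> mat_kernel ?C" using that(1) ks(1,2) nth_mem[of j ks] by auto
    ultimately show ?thesis using mat_kernel_mat_of_rows[OF rs] that(2) by simp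
  qed
  ultimately show thesis using that PQ by blast
qed

lemma min_gens_eq_minus_one_iff:
  fixes X Y :: "'a::field mat"
  assumes X: "X \<in> carrier_mat n n" and Y: "Y \<in> carrier_mat n n" and "2 \<le> n"
  shows "min_gens n X Y = n - 1 \<longleftrightarrow>
    (\<exists>v a b. v \<in> carrier_vec n \<and> a \<in> carrier_vec n \<and> b \<in> carrier_vec n \<and>
      v \<noteq> 0\<^sub>v n \<and> (a \<noteq> 0\<^sub>v n \<or> b \<noteq> 0\<^sub>v n) \<and> X = outer_mat v a \<and> Y = outer_mat v b)"
    (is "_ \<longleftrightarrow> ?outer")
proof -
  interpret vec_space "TYPE('a)" n .
  define A where "A = four_block_mat X Y (0\<^sub>m 0 n) (0\<^sub>m 0 n)"
  have A: "A \<in> carrier_mat n (n + n)"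
    using four_block_carrier_mat[OF X zero_carrier_mat[of 0 n]] by (simp add: A_def)
  have zero: "0\<^sub>v n @\<^sub>v 0\<^sub>v n = (0\<^sub>v (n + n) :: 'a vec)" by (intro eq_vecI) auto
  \<comment> \<open>with truncated subtraction, \<open>n - r = n - 1\<close> forces \<open>r = 1\<close> only because \<open>n \<ge> 2\<close>\<close>
  have "min_gens n X Y = n - 1 \<longleftrightarrow> rank A = 1"
    using \<open>2 \<le> n\<close> unfolding min_gens_def A_def by auto
  also have "rank A = 1 \<longleftrightarrow> ?outer"
  proof
    assume "rank A = 1"
    then obtain v c where v: "v \<in> carrier_vec n" "v \<noteq> 0\<^sub>v n" and c: "c \<in> carrier_vec (n + n)"
      and "c \<noteq> 0\<^sub>v (n + n)" and Ac: "A = outer_mat v c"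
      using rank_eq_1_imp_outer_mat[OF A] by metis
    define a b where "a = vec_first c n" and "b = vec_last c n"
    have c_split: "c = a @\<^sub>v b" using c by (simp add: a_def b_def)
    then have "X = outer_mat v a \<and> Y = outer_mat v b"
      using four_block_mat_eq_outer_mat_iff[OF X Y v(1), of a b] Ac by (simp add: A_def a_def b_def)
    moreover have "a \<noteq> 0\<^sub>v n \<or> b \<noteq> 0\<^sub>v n" using \<open>c \<noteq> 0\<^sub>v (n + n)\<close> c_split zero by metis
    ultimately show ?outer
      using v by (intro exI[of _ v] exI[of _ a] exI[of _ b]) (simp add: a_def b_def)
  next
    assume ?outer
    then obtain v a b where v: "v \<in> carrier_vec n" "v \<noteq> 0\<^sub>v n" and a: "a \<in> carrier_vec n"
      and "b \<in> carrier_vec n" and ab: "a \<noteq> 0\<^sub>v n \<or> b \<noteq> 0\<^sub>v n"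
      and "X = outer_mat v a" and "Y = outer_mat v b"
      by blast
    moreover have "a @\<^sub>v b \<noteq> 0\<^sub>v (n + n)"
    proof
      assume "a @\<^sub>v b = 0\<^sub>v (n + n)"
      then have "a = 0\<^sub>v n \<and> b = 0\<^sub>v n" using append_vec_eq[OF a zero_carrier_vec] zero by metis
      with ab show False by blast
    qed
    ultimately show "rank A = 1"
      unfolding A_def using four_block_outer_mat[of v a b] rank_outer_mat[of v "a @\<^sub>v b"] by simp
  qed
  finally show ?thesis .
qed

lemma min_gens_outer_mat:
  fixes v a b :: "'a::field vec"
  assumes "2 \<le> n" and "v \<in> carrier_vec n" "v \<noteq> 0\<^sub>v n"
    and "a \<in> carrier_vec n" "b \<in> carrier_vec n" "a \<noteq> 0\<^sub>v n \<or> b \<noteq> 0\<^sub>v n"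
  shows "min_gens n (outer_mat v a) (outer_mat v b) = n - 1"
proof (rule iffD2[OF min_gens_eq_minus_one_iff])
  show "\<exists>v' a' b'. v' \<in> carrier_vec n \<and> a' \<in> carrier_vec n \<and> b' \<in> carrier_vec n \<and>
      v' \<noteq> 0\<^sub>v n \<and> (a' \<noteq> 0\<^sub>v n \<or> b' \<noteq> 0\<^sub>v n) \<and>
      outer_mat v a = outer_mat v' a' \<and> outer_mat v b = outer_mat v' b'"
    using assms by blast
qed (use assms outer_mat_carrier[of v] in auto)

lemma scalar_prod_eq_0_if_nilpotent_outer_mat:
  fixes v a :: "'a::field vec"
  assumes v: "v \<in> carrier_vec n" "v \<noteq> 0\<^sub>v n" and a: "a \<in> carrier_vec n"
    and nil: "nilpotent_mat (outer_mat v a)"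
  shows "a \<bullet> v = 0"
proof -
  let ?X = "outer_mat v a"
  have X: "?X \<in> carrier_mat n n" using outer_mat_carrier[of v a] v a by simp
  have pow: "?X ^\<^sub>m k *\<^sub>v v = (a \<bullet> v) ^ k \<cdot>\<^sub>v v" for k
  proof (induction k)
    case 0
    show ?case using X v by simp
  next
    case (Suc k)
    have "?X ^\<^sub>m Suc k *\<^sub>v v = ?X ^\<^sub>m k *\<^sub>v (?X *\<^sub>v v)"
      using assoc_mult_mat_vec[OF pow_carrier_mat[OF X] X v(1)] by simp
    also have "\<dots> = (a \<bullet> v) \<cdot>\<^sub>v (?X ^\<^sub>m k *\<^sub>v v)"
      using outer_mat_mult_vec[of v a v] mult_mat_vec[OF pow_carrier_mat[OF X] v(1)] v a by simp
    also have "\<dots> = (a \<bullet> v) ^ Suc k \<cdot>\<^sub>v v"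
      by (simp add: Suc.IH smult_smult_assoc)
    finally show ?case .
  qed
  obtain k where "?X ^\<^sub>m k = 0\<^sub>m n n" using nil v(1) a unfolding nilpotent_mat_def by auto
  then have "(a \<bullet> v) ^ k \<cdot>\<^sub>v v = 0\<^sub>v n"
    using pow[of k] v by simp
  then show ?thesis using smult_vec_eq_0_iff[OF v(1)] v(2) by simp
qed

lemma kxy_module_outer_mat:
  fixes u \<alpha> \<beta> :: "'a::field vec"
  assumes u: "u \<in> carrier_vec n" and \<alpha>: "\<alpha> \<in> carrier_vec n" "\<alpha> \<bullet> u = 0"
    and \<beta>: "\<beta> \<in> carrier_vec n" "\<beta> \<bullet> u = 0"
  shows "kxy_module n (outer_mat u \<alpha>) (outer_mat u \<beta>)"
proof -
  have zero: "outer_mat u x * outer_mat u y = 0\<^sub>m n n"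
    if "x \<in> carrier_vec n" "x \<bullet> u = 0" "y \<in> carrier_vec n" for x y
  proof -
    have "outer_mat u x * outer_mat u y = 0 \<cdot>\<^sub>m outer_mat u y"
      using outer_mat_mult_outer_mat[of u x u y] that u by simp
    also have "\<dots> = 0\<^sub>m n n" using u that(3) by (intro eq_matI) auto
    finally show ?thesis .
  qed
  have nil: "nilpotent_mat (outer_mat u x)" if "x \<in> carrier_vec n" "x \<bullet> u = 0" for x
  proof -
    have "outer_mat u x ^\<^sub>m 2 = outer_mat u x * outer_mat u x"
      using that u by (simp add: numeral_2_eq_2)
    then show ?thesis
      unfolding nilpotent_mat_def using zero[OF that that(1)] that u by auto
  qed
  show ?thesis
    unfolding kxy_module_def using zero[OF \<alpha> \<beta>(1)] zero[OF \<beta> \<alpha>(1)] nil[OF \<alpha>] nil[OF \<beta>] u \<alpha> \<beta>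
    by auto
qed

lemma outer_mat_unit_vec_eq_triv_plus:
  assumes w: "w \<in> carrier_vec (m + k)" and "0 < k" and zero: "\<forall>j<m. w $ j = 0"
  shows "outer_mat (unit_vec (m + k) m) w = triv_plus m (outer_mat (unit_vec k 0) (vec_last w k))"
  by (rule eq_matI) (use assms in \<open>auto simp: triv_plus_def vec_last_def\<close>)

lemma conj_outer_mat_eq_triv_plus:
  fixes P Q :: "'a::field mat"
  assumes P: "P \<in> carrier_mat n n" and Q: "Q \<in> carrier_mat n n" and QP: "Q * P = 1\<^sub>m n"
    and n: "n = m + k" "0 < k" and a: "a \<in> carrier_vec n"
    and zero: "\<forall>j<m. a \<bullet> col P j = 0"
  shows "Q * outer_mat (col P m) a * P
    = triv_plus m (outer_mat (unit_vec k 0) (vec_last (transpose_mat P *\<^sub>v a) k))"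
proof -
  have "m < n" using n by simp
  have "Q *\<^sub>v col P m = col (Q * P) m" using col_mult2[OF Q P \<open>m < n\<close>] by simp
  also have "\<dots> = unit_vec n m" using QP \<open>m < n\<close> by simp
  finally have Qv: "Q *\<^sub>v col P m = unit_vec n m" .
  have "Q * outer_mat (col P m) a * P = outer_mat (unit_vec n m) (transpose_mat P *\<^sub>v a)"
    using P Q a by (simp add: mult_outer_mat outer_mat_mult Qv)
  also have "\<dots> = triv_plus m (outer_mat (unit_vec k 0) (vec_last (transpose_mat P *\<^sub>v a) k))"
    using outer_mat_unit_vec_eq_triv_plus[of "transpose_mat P *\<^sub>v a" m k] P a n zero
    by (simp add: scalar_prod_col_comm)
  finally show ?thesis .
qed

lemma vec_last_transpose_mult_vec_neq_0:
  fixes P Q :: "'a::field mat"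
  assumes P: "P \<in> carrier_mat n n" and Q: "Q \<in> carrier_mat n n" and PQ: "P * Q = 1\<^sub>m n"
    and n: "n = m + k" and a: "a \<in> carrier_vec n" "a \<noteq> 0\<^sub>v n"
    and zero: "\<forall>j<m. a \<bullet> col P j = 0"
  shows "vec_last (transpose_mat P *\<^sub>v a) k \<noteq> 0\<^sub>v k"
proof
  let ?w = "transpose_mat P *\<^sub>v a"
  assume "vec_last ?w k = 0\<^sub>v k"
  have "?w $ j = 0" if "j < n" for j
  proof (cases "j < m")
    case True
    then show ?thesis using zero scalar_prod_col_comm[OF P a(1) that] that P by simp
  next
    case False
    then obtain i where j: "j = m + i" by (metis add_diff_inverse_nat)
    have "?w $ j = vec_last ?w k $ i" using that n P j by (simp add: vec_last_def)
    also have "\<dots> = 0" using \<open>vec_last ?w k = 0\<^sub>v k\<close> that n j by simp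
    finally show ?thesis .
  qed
  then have "?w = 0\<^sub>v n" using P by (intro eq_vecI) auto
  have "a = transpose_mat (P * Q) *\<^sub>v a" using PQ a by simp
  also have "\<dots> = transpose_mat Q *\<^sub>v ?w" using P Q a by (simp add: transpose_mult)
  also have "\<dots> = 0\<^sub>v n" using \<open>?w = 0\<^sub>v n\<close> Q by (intro eq_vecI) (auto simp: scalar_prod_def)
  finally show False using a(2) by simp
qed

lemma conj_outer_mat_normal_form:
  fixes P Q :: "'a::field mat"
  assumes P: "P \<in> carrier_mat n n" and Q: "Q \<in> carrier_mat n n"
    and PQ: "P * Q = 1\<^sub>m n" and QP: "Q * P = 1\<^sub>m n"
    and n: "n = m + k" "0 < k" and a: "a \<in> carrier_vec n"
    and zero: "\<forall>j<m. a \<bullet> col P j = 0"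
  obtains \<alpha> where "\<alpha> \<in> carrier_vec k" and "\<alpha> \<bullet> unit_vec k 0 = a \<bullet> col P m"
    and "a \<noteq> 0\<^sub>v n \<Longrightarrow> \<alpha> \<noteq> 0\<^sub>v k"
    and "Q * outer_mat (col P m) a * P = triv_plus m (outer_mat (unit_vec k 0) \<alpha>)"
proof
  let ?\<alpha> = "vec_last (transpose_mat P *\<^sub>v a) k"
  show "?\<alpha> \<in> carrier_vec k" by simp
  show "?\<alpha> \<bullet> unit_vec k 0 = a \<bullet> col P m"
    using n P a scalar_prod_col_comm[OF P a] by (simp add: vec_last_def)
  show "a \<noteq> 0\<^sub>v n \<Longrightarrow> ?\<alpha> \<noteq> 0\<^sub>v k"
    using vec_last_transpose_mult_vec_neq_0[OF P Q PQ n(1) a] zero by blast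
  show "Q * outer_mat (col P m) a * P = triv_plus m (outer_mat (unit_vec k 0) ?\<alpha>)"
    by (rule conj_outer_mat_eq_triv_plus[OF P Q QP n a zero])
qed

lemma kxy_iso_conj:
  assumes P: "P \<in> carrier_mat n n" and Q: "Q \<in> carrier_mat n n"
    and PQ: "P * Q = 1\<^sub>m n" and QP: "Q * P = 1\<^sub>m n"
    and X: "X \<in> carrier_mat n n" and Y: "Y \<in> carrier_mat n n"
  shows "kxy_iso n X Y (Q * X * P) (Q * Y * P)"
proof -
  have "P * (Q * Z * P) * Q = Z" if Z: "Z \<in> carrier_mat n n" for Z
  proof -
    have "P * (Q * Z * P) * Q = (P * Q) * Z * (P * Q)"
      using P Q Z by (simp add: assoc_mult_mat[of _ n n _ n _ n])
    then show ?thesis using PQ Z by simp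
  qed
  then show ?thesis unfolding kxy_iso_def using P Q PQ QP X Y by metis
qed

theorem proposition2p3:
  fixes X Y :: "'a::field_char_0 mat" and n :: nat
  assumes "alg_closed TYPE('a)"
    and "kxy_module n X Y"
    and "n \<ge> 3"
    and "min_gens n X Y = n - 1"
  shows "\<exists>XN YN. kxy_module 3 XN YN \<and> min_gens 3 XN YN = 2 \<and>
           kxy_iso n X Y (triv_plus (n - 3) XN) (triv_plus (n - 3) YN)"
proof -
  have X: "X \<in> carrier_mat n n" and Y: "Y \<in> carrier_mat n n"
    and nil: "nilpotent_mat X" "nilpotent_mat Y"
    using assms(2) unfolding kxy_module_def by auto
  obtain v a b where v: "v \<in> carrier_vec n" "v \<noteq> 0\<^sub>v n" and a: "a \<in> carrier_vec n"
    and b: "b \<in> carrier_vec n" and ab: "a \<noteq> 0\<^sub>v n \<or> b \<noteq> 0\<^sub>v n"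
    and XY: "X = outer_mat v a" "Y = outer_mat v b"
    using min_gens_eq_minus_one_iff[OF X Y] assms(3,4) by auto
  have av: "a \<bullet> v = 0" and bv: "b \<bullet> v = 0"
    using scalar_prod_eq_0_if_nilpotent_outer_mat v a b nil XY by auto
  define m where "m = n - 3"
  have nm: "n = m + 3" using assms(3) by (simp add: m_def)
  obtain P Q where PQ: "P \<in> carrier_mat n n" "Q \<in> carrier_mat n n" "P * Q = 1\<^sub>m n" "Q * P = 1\<^sub>m n"
    and Pv: "col P m = v" and zero: "\<forall>j<m. a \<bullet> col P j = 0" "\<forall>j<m. b \<bullet> col P j = 0"
    using invertible_mat_with_common_zero_cols[of "[a, b]" n v] a b v av bv
    by (simp add: m_def numeral_3_eq_3) metis
  obtain \<alpha> where \<alpha>: "\<alpha> \<in> carrier_vec 3" "\<alpha> \<bullet> unit_vec 3 0 = 0" "a \<noteq> 0\<^sub>v n \<Longrightarrow> \<alpha> \<noteq> 0\<^sub>v 3"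
    and XN: "Q * X * P = triv_plus m (outer_mat (unit_vec 3 0) \<alpha>)"
    using conj_outer_mat_normal_form[OF PQ nm _ a zero(1)] Pv XY av by auto
  obtain \<beta> where \<beta>: "\<beta> \<in> carrier_vec 3" "\<beta> \<bullet> unit_vec 3 0 = 0" "b \<noteq> 0\<^sub>v n \<Longrightarrow> \<beta> \<noteq> 0\<^sub>v 3"
    and YN: "Q * Y * P = triv_plus m (outer_mat (unit_vec 3 0) \<beta>)"
    using conj_outer_mat_normal_form[OF PQ nm _ b zero(2)] Pv XY bv by auto
  have "kxy_module 3 (outer_mat (unit_vec 3 0) \<alpha>) (outer_mat (unit_vec 3 0) \<beta>)"
    using kxy_module_outer_mat[of "unit_vec 3 0" 3 \<alpha> \<beta>] \<alpha> \<beta> by simp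
  moreover have "min_gens 3 (outer_mat (unit_vec 3 0) \<alpha>) (outer_mat (unit_vec 3 0) \<beta>) = 3 - 1"
    using min_gens_outer_mat[of 3 "unit_vec 3 0" \<alpha> \<beta>] \<alpha> \<beta> ab by auto
  moreover have "kxy_iso n X Y (triv_plus m (outer_mat (unit_vec 3 0) \<alpha>))
      (triv_plus m (outer_mat (unit_vec 3 0) \<beta>))"
    using kxy_iso_conj[OF PQ X Y] XN YN by simp
  ultimately show ?thesis unfolding m_def by auto
qed

end
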